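(* Let $(E,C)$ be a separated graph, $S\subseteq C_{fin}$, and $K$ a field. For each $X\in C$ let $A_X$ be the $K$-algebra defined in the context, let $A$ be the free product of the $K$-algebras $\{A_X\}_{X\in C}$, and let $I$ be the two-sided ideal of $A$ generated by $\{v_X-v_Y: X,Y\in C,\ v\in E^0\}$. Then $L_K(E,C,S)$ is $K$-isomorphic to the amalgamated free product $A/I$, via an isomorphism sending $e\mapsto[e]$, $e^*\mapsto[e^*]$ for $e\in E^1$ and $v\mapsto[v_X]$ for $v\in E^0$ (any $X\in C$).
   Context: A separated graph is a pair $(E,C)$ where $E=(E^0,E^1,r,s)$ is a directed graph and $C=\bigcup_{v\in E^0}C_v$, where for each non-sink $v$, $C_v$ is a partition of $s^{-1}(v)$ into pairwise disjoint nonempty sets; $C_{fin}$ is the set of finite $Y\in C$. The Cohn-Leavitt algebra $L_K(E,C,S)$ is the universal $K$-algebra generated by pairwise orthogonal idempotents $\{v:v\in E^0\}$ and elements $\{e,e^*:e\in E^1\}$ subject to: $s(e)e=er(e)=e$; $r(e)e^*=e^*s(e)=e^*$; $e^*f=\delta_{e,f}r(e)$ for $e,f\in Y$, $Y\in C$; $v=\sum_{e\in X}ee^*$ for every $X\in S\cap C_v$, $v$ non-sink. For $X\in C$, let $E_X^0=\{v_X:v\in E^0\}$ be a copy of $E^0$, and let $A_X$ be the universal $K$-algebra generated by $E_X^0\cup\{e,e^*:e\in X\}$ subject to: the elements of $E_X^0$ are pairwise orthogonal idempotents; $e\,r(e)_X=e=s(e)_X\,e$ and $r(e)_X e^*=e^*=e^*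 s(e)_X$ for $e\in X$; $e^*f=\delta_{e,f}r(e)_X$ for $e,f\in X$; and, if $X\in S$, $v_X=\sum_{e\in X}ee^*$ where $v$ is the common source of the edges in $X$ (i.e. $X\in C_v$). $[a]$ denotes the class in $A/I$ of $a\in A$. *)

theory Defs
  imports "HOL-Library.Poly_Mapping"
begin

datatype 'g word = Word "'g list"

fun letters :: "'g word \<Rightarrow> 'g list" where "letters (Word xs) = xs"

instantiation word :: (type) monoid_add
begin
definition zero_word :: "'g word" where "zero_word = Word []"
fun plus_word :: "'g word \<Rightarrow> 'g word \<Rightarrow> 'g word" where
  "plus_word (Word xs) (Word ys) = Word (xs @ ys)"
instance
proof
  fix a b c :: "'g word"
  show "a + b + c = a + (b + c)" by (cases a; cases b; cases c) simp
  show "0 + a = a" by (cases a) (simp add: zero_word_def)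
  show "a + 0 = a" by (cases a) (simp add: zero_word_def)
qed
end

text \<open>The free unital K-algebra on the generator type 'g: finitely supported
  K-linear combinations of words, with concatenation product.\<close>
type_synonym ('g,'k) freealg = "('g word, 'k) poly_mapping"

definition gen :: "'g \<Rightarrow> ('g,'k::semiring_1) freealg" where
  "gen g = Poly_Mapping.single (Word [g]) 1"

definition scal :: "'k::semiring_1 \<Rightarrow> ('g,'k) freealg" where
  "scal c = Poly_Mapping.single (Word []) c"

text \<open>Elements involving only generators from G (the free algebra on G).\<close>
definition over :: "'g set \<Rightarrow> ('g,'k::zero) freealg \<Rightarrow> bool" where
  "over G p \<longleftrightarrow> (\<forall>w\<in>Poly_Mapping.keys p. set (letters w) \<subseteq> G)"

text \<open>Elements with zero constant term: the free non-unital algebra.\<close>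
definition nonunital :: "('g,'k::zero) freealg \<Rightarrow> bool" where
  "nonunital p \<longleftrightarrow> Poly_Mapping.lookup p (Word []) = 0"

inductive_set gideal :: "'g set \<Rightarrow> ('g,'k::ring_1) freealg set \<Rightarrow> ('g,'k) freealg set"
  for G R where
  zero: "0 \<in> gideal G R"
| gen: "r \<in> R \<Longrightarrow> over G a \<Longrightarrow> over G b \<Longrightarrow> a * r * b \<in> gideal G R"
| add: "x \<in> gideal G R \<Longrightarrow> y \<in> gideal G R \<Longrightarrow> x + y \<in> gideal G R"

text \<open>Universal non-unital K-algebra \<open>\<langle>G | R\<rangle>\<close> is
  \<open>{p. over G p \<and> nonunital p} / gideal G R\<close>.  A K-algebra isomorphism between
  two such presented algebras, given by a lift \<Phi> on representatives:\<close>
definition pres_iso ::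
  "'g set \<Rightarrow> ('g,'k::field) freealg set \<Rightarrow> 'h set \<Rightarrow> ('h,'k) freealg set
   \<Rightarrow> (('g,'k) freealg \<Rightarrow> ('h,'k) freealg) \<Rightarrow> bool" where
  "pres_iso G R H Q \<Phi> \<longleftrightarrow>
     (\<forall>x. over G x \<and> nonunital x \<longrightarrow> over H (\<Phi> x) \<and> nonunital (\<Phi> x)) \<and>
     (\<forall>x y. over G x \<and> nonunital x \<and> over G y \<and> nonunital y \<longrightarrow>
        \<Phi> (x + y) = \<Phi> x + \<Phi> y \<and>
        \<Phi> (x * y) - \<Phi> x * \<Phi> y \<in> gideal H Q) \<and>
     (\<forall>c x. over G x \<and> nonunital x \<longrightarrow> \<Phi> (scal c * x) = scal c * \<Phi> x) \<and>
     (\<forall>x. over G x \<and> nonunital x \<longrightarrow> (x \<in> gideal G R \<longleftrightarrow> \<Phi> x \<in> gideal H Q)) \<and>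
     (\<forall>y. over H y \<and> nonunital y \<longrightarrow>
        (\<exists>x. over G x \<and> nonunital x \<and> \<Phi> x - y \<in> gideal H Q))"

text \<open>Graph with vertex set V, edge set Ed, source s, range r; C a set of sets of
  edges such that for each vertex v, \<open>C_v = {X\<in>C. X \<subseteq> s\<inverse>(v)}\<close> partitions
  \<open>s\<inverse>(v)\<close> into nonempty sets (empty for sinks).\<close>
definition Cv :: "('e \<Rightarrow> 'v) \<Rightarrow> 'e set set \<Rightarrow> 'v \<Rightarrow> 'e set set" where
  "Cv s C v = {X\<in>C. X \<noteq> {} \<and> (\<forall>e\<in>X. s e = v)}"

definition separated_graph ::
  "'v set \<Rightarrow> 'e set \<Rightarrow> ('e \<Rightarrow> 'v) \<Rightarrow> ('e \<Rightarrow> 'v) \<Rightarrow> 'e set set \<Rightarrow> bool" where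
  "separated_graph V Ed s r C \<longleftrightarrow>
     (\<forall>e\<in>Ed. s e \<in> V \<and> r e \<in> V) \<and>
     C = (\<Union>v\<in>V. Cv s C v) \<and>
     (\<forall>v\<in>V. (\<forall>X\<in>Cv s C v. \<forall>Y\<in>Cv s C v. X \<noteq> Y \<longrightarrow> X \<inter> Y = {}) \<and>
             \<Union>(Cv s C v) = {e\<in>Ed. s e = v})"

datatype ('v,'e) lgen = LV 'v | LE 'e | LS 'e   \<comment> \<open>v, e, e*\<close>

definition L_gens :: "'v set \<Rightarrow> 'e set \<Rightarrow> ('v,'e) lgen set" where
  "L_gens V Ed = LV ` V \<union> LE ` Ed \<union> LS ` Ed"

definition L_rels :: "'v set \<Rightarrow> 'e set \<Rightarrow> ('e \<Rightarrow> 'v) \<Rightarrow> ('e \<Rightarrow> 'v) \<Rightarrow> 'e set set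
    \<Rightarrow> 'e set set \<Rightarrow> (('v,'e) lgen,'k::field) freealg set" where
  "L_rels V Ed s r C S =
     {gen (LV v) * gen (LV w) - (if v = w then gen (LV v) else 0) | v w. v \<in> V \<and> w \<in> V}
   \<union> {gen (LV (s e)) * gen (LE e) - gen (LE e) | e. e \<in> Ed}
   \<union> {gen (LE e) * gen (LV (r e)) - gen (LE e) | e. e \<in> Ed}
   \<union> {gen (LV (r e)) * gen (LS e) - gen (LS e) | e. e \<in> Ed}
   \<union> {gen (LS e) * gen (LV (s e)) - gen (LS e) | e. e \<in> Ed}
   \<union> {gen (LS e) * gen (LE f) - (if e = f then gen (LV (r e)) else 0) | e f Y.
        Y \<in> C \<and> e \<in> Y \<and> f \<in> Y}
   \<union> {gen (LV v) - (\<Sum>e\<in>X. gen (LE e) * gen (LS e)) | v X.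
        v \<in> V \<and> X \<in> S \<and> X \<in> Cv s C v}"

datatype ('v,'e) agen = AV "'e set" 'v | AE 'e | AS 'e   \<comment> \<open>v_X, e, e* (e \<in> X)\<close>

definition AX_gens :: "'v set \<Rightarrow> 'e set \<Rightarrow> ('v,'e) agen set" where
  "AX_gens V X = (\<lambda>v. AV X v) ` V \<union> AE ` X \<union> AS ` X"

definition AX_rels :: "'v set \<Rightarrow> ('e \<Rightarrow> 'v) \<Rightarrow> ('e \<Rightarrow> 'v) \<Rightarrow> 'e set set \<Rightarrow> 'e set
    \<Rightarrow> (('v,'e) agen,'k::field) freealg set" where
  "AX_rels V s r S X =
     {gen (AV X v) * gen (AV X w) - (if v = w then gen (AV X v) else 0) | v w. v \<in> V \<and> w \<in> V}
   \<union> {gen (AE e) * gen (AV X (r e)) - gen (AE e) | e. e \<in> X}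
   \<union> {gen (AV X (s e)) * gen (AE e) - gen (AE e) | e. e \<in> X}
   \<union> {gen (AV X (r e)) * gen (AS e) - gen (AS e) | e. e \<in> X}
   \<union> {gen (AS e) * gen (AV X (s e)) - gen (AS e) | e. e \<in> X}
   \<union> {gen (AS e) * gen (AE f) - (if e = f then gen (AV X (r e)) else 0) | e f.
        e \<in> X \<and> f \<in> X}
   \<union> {gen (AV X v) - (\<Sum>e\<in>X. gen (AE e) * gen (AS e)) | v.
        X \<in> S \<and> (\<forall>e\<in>X. s e = v)}"

text \<open>The free product A of the A_X (X \<in> C): generators the disjoint union of
  the generators of the A_X, relations the union of their relations.\<close>
definition A_gens :: "'v set \<Rightarrow> 'e set set \<Rightarrow> ('v,'e) agen set" where
  "A_gens V C = (\<Union>X\<in>C. AX_gens V X)"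

definition A_rels :: "'v set \<Rightarrow> ('e \<Rightarrow> 'v) \<Rightarrow> ('e \<Rightarrow> 'v) \<Rightarrow> 'e set set \<Rightarrow> 'e set set
    \<Rightarrow> (('v,'e) agen,'k::field) freealg set" where
  "A_rels V s r C S = (\<Union>X\<in>C. AX_rels V s r S X)"

definition I_gens :: "'v set \<Rightarrow> 'e set set \<Rightarrow> (('v,'e) agen,'k::field) freealg set" where
  "I_gens V C = {gen (AV X v) - gen (AV Y v) | X Y v. X \<in> C \<and> Y \<in> C \<and> v \<in> V}"

end

(*
  The two algebras have matching generators: e, e*, v on one side and e, e*, v_X on the other,
  where modulo I all copies v_X of a vertex coincide.  Substituting generators therefore gives
  algebra maps in both directions, mutually inverse on generators modulo the relations.
  They respect the relations because every defining relation of L_K(E,C,S) involves the edges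
  of at most one block X, and so is the image of a defining relation of A_X once each vertex is
  sent to its copy in A_X; sending it to another copy changes the image only modulo I.
  Conversely every relation of an A_X becomes a defining relation of L_K(E,C,S), and every
  generator v_X - v_Y of I becomes 0.
*)

theory Submission
  imports Defs
begin

section \<open>Free algebras\<close>

lemma poly_mapping_additive_induct [case_names zero single add]:
  assumes "P 0" and "\<And>w c. P (Poly_Mapping.single w c)"
    and "\<And>a b. P a \<Longrightarrow> P b \<Longrightarrow> P (a + b)"
  shows "P (p :: 'a \<Rightarrow>\<^sub>0 'b::comm_monoid_add)"
proof (induction p rule: update_induct)
  case const
  show ?case by (rule assms(1))
next
  case (update f a b)
  have "Poly_Mapping.update a b f = f + Poly_Mapping.single a b"
    using update.hyps(1)
    by (intro poly_mapping_eqI) (auto simp: lookup_update lookup_add lookup_single in_keys_iff when_def)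
  then show ?case using assms(2,3) update.IH by simp
qed

lemma Word_Nil_eq_zero: "Word [] = 0"
  by (simp add: zero_word_def)

lemma letters_plus: "letters (u + w) = letters u @ letters w"
  by (cases u; cases w) simp

lemma word_plus_eq_zero: "u + w = (0 :: 'g word) \<Longrightarrow> u = 0 \<and> w = 0"
  by (cases u; cases w) (auto simp: zero_word_def)

lemma scal_0 [simp]: "scal 0 = 0"
  by (simp add: scal_def)

lemma scal_1 [simp]: "scal 1 = 1"
  by (simp add: scal_def Word_Nil_eq_zero)

lemma scal_add: "scal (a + b) = scal a + scal b"
  by (simp add: scal_def single_add)

lemma scal_mult: "scal (a * b) = scal a * scal b"
  by (simp add: scal_def mult_single Word_Nil_eq_zero)

lemma scal_commute: "scal (c::'k::comm_semiring_1) * x = x * scal c"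
proof (induction x rule: poly_mapping_additive_induct)
  case (single w d)
  show ?case by (simp add: scal_def mult_single Word_Nil_eq_zero mult.commute)
qed (simp_all add: distrib_left distrib_right)

section \<open>Substitution homomorphisms\<close>

fun eval_word :: "('g \<Rightarrow> ('h,'k::semiring_1) freealg) \<Rightarrow> 'g word \<Rightarrow> ('h,'k) freealg" where
  "eval_word f (Word xs) = prod_list (map f xs)"

definition freealg_hom :: "('g \<Rightarrow> ('h,'k::semiring_1) freealg) \<Rightarrow> ('g,'k) freealg \<Rightarrow> ('h,'k) freealg" where
  "freealg_hom f p = (\<Sum>w\<in>Poly_Mapping.keys p. scal (Poly_Mapping.lookup p w) * eval_word f w)"

lemma eval_word_zero [simp]: "eval_word f 0 = 1"
  by (simp add: zero_word_def)

lemma eval_word_plus: "eval_word f (u + w) = eval_word f u * eval_word f w"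
  by (cases u; cases w) simp

lemma freealg_hom_single: "freealg_hom f (Poly_Mapping.single w c) = scal c * eval_word f w"
  by (cases "c = 0") (simp_all add: freealg_hom_def)

lemma freealg_hom_0 [simp]: "freealg_hom f 0 = 0"
  by (simp add: freealg_hom_def)

lemma freealg_hom_add: "freealg_hom f (x + y) = freealg_hom f x + freealg_hom f y"
  unfolding freealg_hom_def
  by (rule setsum_keys_plus_distrib) (simp_all add: scal_add distrib_right)

lemma freealg_hom_diff:
  "freealg_hom f (x - y) = freealg_hom f x - (freealg_hom f y :: ('h,'k::comm_ring_1) freealg)"
  using freealg_hom_add[of f "x - y" y] by (simp add: algebra_simps)

lemma freealg_hom_sum: "freealg_hom f (sum g A) = (\<Sum>a\<in>A. freealg_hom f (g a))"
  by (induction A rule: infinite_finite_induct) (simp_all add: freealg_hom_add)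

lemma freealg_hom_mult:
  "freealg_hom f (x * y) = freealg_hom f x * (freealg_hom f y :: ('h,'k::comm_semiring_1) freealg)"
proof (induction x rule: poly_mapping_additive_induct)
  case (single u a)
  show ?case
  proof (induction y rule: poly_mapping_additive_induct)
    case (single v b)
    have "scal (a * b) * (eval_word f u * eval_word f v)
        = scal a * (scal b * eval_word f u) * eval_word f v"
      by (simp only: scal_mult mult.assoc)
    also have "\<dots> = (scal a * eval_word f u) * (scal b * eval_word f v)"
      by (simp only: scal_commute[of b] mult.assoc)
    finally show ?case
      by (simp only: mult_single freealg_hom_single eval_word_plus)
  qed (simp_all add: distrib_left freealg_hom_add)
qed (simp_all add: distrib_right freealg_hom_add)

lemma freealg_hom_gen [simp]: "freealg_hom f (gen g) = (f g :: ('h,'k::comm_semiring_1) freealg)"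
  by (simp add: gen_def freealg_hom_single)

lemma freealg_hom_scal [simp]: "freealg_hom f (scal c) = (scal c :: ('h,'k::comm_semiring_1) freealg)"
  by (simp add: scal_def freealg_hom_single Word_Nil_eq_zero)

lemma freealg_hom_1 [simp]: "freealg_hom f 1 = (1 :: ('h,'k::comm_semiring_1) freealg)"
  using freealg_hom_scal[of f 1] by simp

lemma eval_word_gen: "eval_word gen w = (Poly_Mapping.single w 1 :: ('h,'k::semiring_1) freealg)"
proof -
  have "eval_word gen (Word xs) = (Poly_Mapping.single (Word xs) 1 :: ('h,'k) freealg)" for xs
    by (induction xs) (simp_all add: gen_def mult_single Word_Nil_eq_zero)
  then show ?thesis by (cases w) simp
qed

lemma freealg_hom_gen_id [simp]: "freealg_hom gen p = (p :: ('h,'k::comm_semiring_1) freealg)"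
  by (induction p rule: poly_mapping_additive_induct)
    (simp_all add: freealg_hom_single eval_word_gen scal_def mult_single Word_Nil_eq_zero freealg_hom_add)

lemma freealg_hom_eval_word:
  "freealg_hom g (eval_word f w) = eval_word (freealg_hom g \<circ> f) w"
  for g :: "'b \<Rightarrow> ('c,'k::comm_semiring_1) freealg"
proof (cases w)
  case (Word xs)
  then show ?thesis by (induction xs arbitrary: w) (simp_all add: freealg_hom_mult)
qed

lemma freealg_hom_comp: "freealg_hom g (freealg_hom f p) = freealg_hom (freealg_hom g \<circ> f) p"
  for g :: "'b \<Rightarrow> ('c,'k::comm_semiring_1) freealg"
  by (induction p rule: poly_mapping_additive_induct)
    (simp_all add: freealg_hom_single freealg_hom_mult freealg_hom_eval_word freealg_hom_add comp_def)

lemma over_0 [simp]: "over G 0"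
  by (simp add: over_def)

lemma over_1 [simp]: "over G 1"
  by (simp add: over_def zero_word_def)

lemma over_scal [simp]: "over G (scal c)"
  by (simp add: over_def scal_def)

lemma over_gen: "g \<in> G \<Longrightarrow> over G (gen g)"
  by (simp add: over_def gen_def)

lemma over_add: "over G x \<Longrightarrow> over G y \<Longrightarrow> over G (x + y)"
  unfolding over_def using keys_add[of x y] by blast

lemma over_uminus: "over G x \<Longrightarrow> over G (- x :: ('g,'k::ab_group_add) freealg)"
  by (simp add: over_def)

lemma over_diff: "over G x \<Longrightarrow> over G y \<Longrightarrow> over G (x - y :: ('g,'k::ab_group_add) freealg)"
  unfolding diff_conv_add_uminus by (intro over_add over_uminus)

lemma over_mult: "over G x \<Longrightarrow> over G y \<Longrightarrow> over G (x * y)"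
  unfolding over_def using keys_mult[of x y] by (fastforce simp: letters_plus)

lemma over_sum: "(\<And>a. a \<in> A \<Longrightarrow> over G (f a)) \<Longrightarrow> over G (sum f A)"
  by (induction A rule: infinite_finite_induct) (simp_all add: over_add)

lemma over_eval_word: "(\<And>g. g \<in> set (letters w) \<Longrightarrow> over H (f g)) \<Longrightarrow> over H (eval_word f w)"
proof (cases w)
  case (Word xs)
  then show "(\<And>g. g \<in> set (letters w) \<Longrightarrow> over H (f g)) \<Longrightarrow> ?thesis"
    by (induction xs arbitrary: w) (simp_all add: over_mult)
qed

lemma over_freealg_hom:
  assumes "over G p" and "\<And>g. g \<in> G \<Longrightarrow> over H (f g)"
  shows "over H (freealg_hom f p)"
  unfolding freealg_hom_def
proof (intro over_sum over_mult over_scal over_eval_word)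
  fix w g assume "w \<in> Poly_Mapping.keys p" and "g \<in> set (letters w)"
  then have "g \<in> G" using assms(1) by (auto simp: over_def)
  then show "over H (f g)" by (rule assms(2))
qed

lemma nonunital_iff_keys: "nonunital x \<longleftrightarrow> 0 \<notin> Poly_Mapping.keys x"
  by (simp add: nonunital_def in_keys_iff Word_Nil_eq_zero)

lemma nonunital_0 [simp]: "nonunital 0"
  by (simp add: nonunital_def)

lemma nonunital_gen: "nonunital (gen g)"
  by (simp add: nonunital_def gen_def lookup_single)

lemma nonunital_add: "nonunital x \<Longrightarrow> nonunital y \<Longrightarrow> nonunital (x + y)"
  by (simp add: nonunital_def lookup_add)

lemma nonunital_sum: "(\<And>a. a \<in> A \<Longrightarrow> nonunital (f a)) \<Longrightarrow> nonunital (sum f A)"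
  by (induction A rule: infinite_finite_induct) (simp_all add: nonunital_add)

lemma nonunital_mult_left: "nonunital x \<Longrightarrow> nonunital (x * y)"
  unfolding nonunital_iff_keys using keys_mult[of x y] by (force dest: sym[THEN word_plus_eq_zero])

lemma nonunital_mult_right: "nonunital y \<Longrightarrow> nonunital (x * y)"
  unfolding nonunital_iff_keys using keys_mult[of x y] by (force dest: sym[THEN word_plus_eq_zero])

lemma nonunital_freealg_hom:
  assumes "over G p" and "nonunital p" and "\<And>g. g \<in> G \<Longrightarrow> nonunital (f g)"
  shows "nonunital (freealg_hom f p)"
  unfolding freealg_hom_def
proof (intro nonunital_sum nonunital_mult_right)
  fix w assume w: "w \<in> Poly_Mapping.keys p"
  obtain x xs where "w = Word (x # xs)"
  proof (cases w)
    case (Word ys)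
    moreover have "ys \<noteq> []" using w assms(2) Word by (auto simp: nonunital_iff_keys Word_Nil_eq_zero)
    ultimately show ?thesis using that by (cases ys) auto
  qed
  moreover have "set (letters w) \<subseteq> G" using w assms(1) by (simp add: over_def)
  ultimately show "nonunital (eval_word f w)"
    using assms(3) by (simp add: nonunital_mult_left)
qed

section \<open>Ideals and isomorphisms of presented algebras\<close>

lemma gideal_base: "r \<in> R \<Longrightarrow> r \<in> gideal G R"
  using gideal.gen[of r R G 1 1] by simp

lemma gideal_mult_left: "x \<in> gideal G R \<Longrightarrow> over G c \<Longrightarrow> c * x \<in> gideal G R"
proof (induction rule: gideal.induct)
  case (gen r a b)
  then have "(c * a) * r * b \<in> gideal G R" by (intro gideal.gen over_mult)
  then show ?case by (simp add: mult.assoc)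
qed (simp_all add: distrib_left gideal.intros)

lemma gideal_mult_right: "x \<in> gideal G R \<Longrightarrow> over G c \<Longrightarrow> x * c \<in> gideal G R"
proof (induction rule: gideal.induct)
  case (gen r a b)
  then have "a * r * (b * c) \<in> gideal G R" by (intro gideal.gen over_mult)
  then show ?case by (simp add: mult.assoc)
qed (simp_all add: distrib_right gideal.intros)

lemma gideal_uminus: "x \<in> gideal G R \<Longrightarrow> - x \<in> gideal G R"
  using gideal_mult_left[of x G R "- 1"] by (simp add: over_uminus)

lemma gideal_diff: "x \<in> gideal G R \<Longrightarrow> y \<in> gideal G R \<Longrightarrow> x - y \<in> gideal G R"
  unfolding diff_conv_add_uminus by (intro gideal.add gideal_uminus)

lemma gideal_sum: "(\<And>a. a \<in> A \<Longrightarrow> f a \<in> gideal G R) \<Longrightarrow> sum f A \<in> gideal G R"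
  by (induction A rule: infinite_finite_induct) (simp_all add: gideal.intros)

lemma freealg_hom_gideal:
  fixes f :: "'g \<Rightarrow> ('h,'k::comm_ring_1) freealg"
  assumes "\<And>g. g \<in> G \<Longrightarrow> over H (f g)" and "\<And>r. r \<in> R \<Longrightarrow> freealg_hom f r \<in> gideal H Q"
    and "x \<in> gideal G R"
  shows "freealg_hom f x \<in> gideal H Q"
  using assms(3)
proof (induction rule: gideal.induct)
  case (gen r a b)
  then show ?case
    using assms(1,2) by (simp add: freealg_hom_mult gideal_mult_left gideal_mult_right over_freealg_hom)
qed (simp_all add: freealg_hom_add gideal.intros)

lemma freealg_hom_congruent:
  fixes f f' :: "'g \<Rightarrow> ('h,'k::comm_ring_1) freealg"
  assumes ff': "\<And>g. g \<in> G \<Longrightarrow> over H (f g) \<and> over H (f' g) \<and> f g - f' g \<in> gideal H Q"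
    and "over G x"
  shows "freealg_hom f x - freealg_hom f' x \<in> gideal H Q"
proof -
  have word: "eval_word f (Word xs) - eval_word f' (Word xs) \<in> gideal H Q" if "set xs \<subseteq> G" for xs
    using that
  proof (induction xs)
    case (Cons g xs)
    have "eval_word f (Word (g # xs)) - eval_word f' (Word (g # xs))
        = (f g - f' g) * eval_word f (Word xs) + f' g * (eval_word f (Word xs) - eval_word f' (Word xs))"
      by (simp add: algebra_simps)
    moreover have "over H (eval_word f (Word xs))"
      using Cons.prems ff' by (intro over_eval_word) auto
    ultimately show ?case
      using Cons ff'[of g] by (simp add: gideal.add gideal_mult_left gideal_mult_right)
  qed (simp add: gideal.zero)
  have "freealg_hom f x - freealg_hom f' x
      = (\<Sum>w\<in>Poly_Mapping.keys x. scal (Poly_Mapping.lookup x w) * (eval_word f w - eval_word f' w))"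
    by (simp add: freealg_hom_def sum_subtractf right_diff_distrib)
  also have "\<dots> \<in> gideal H Q"
  proof (intro gideal_sum gideal_mult_left over_scal)
    fix w assume "w \<in> Poly_Mapping.keys x"
    then have "set (letters w) \<subseteq> G" using assms(2) by (simp add: over_def)
    then show "eval_word f w - eval_word f' w \<in> gideal H Q"
      using word by (cases w) simp
  qed
  finally show ?thesis .
qed

lemma freealg_hom_inverse_congruent:
  fixes f :: "'g \<Rightarrow> ('h,'k::comm_ring_1) freealg" and g :: "'h \<Rightarrow> ('g,'k) freealg"
  assumes "\<And>a. a \<in> G \<Longrightarrow> over H (f a)" and "\<And>b. b \<in> H \<Longrightarrow> over G (g b)"
    and "\<And>a. a \<in> G \<Longrightarrow> freealg_hom g (f a) - gen a \<in> gideal G R"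
    and "over G x"
  shows "freealg_hom g (freealg_hom f x) - x \<in> gideal G R"
proof -
  have "freealg_hom (freealg_hom g \<circ> f) x - freealg_hom gen x \<in> gideal G R"
    by (rule freealg_hom_congruent[OF _ assms(4)])
      (use assms(1-3) in \<open>auto intro: over_freealg_hom over_gen\<close>)
  then show ?thesis by (simp add: freealg_hom_comp)
qed

lemma pres_iso_freealg_hom:
  fixes f :: "'g \<Rightarrow> ('h,'k::field) freealg" and g :: "'h \<Rightarrow> ('g,'k) freealg"
  assumes f_gens: "\<And>a. a \<in> G \<Longrightarrow> over H (f a) \<and> nonunital (f a)"
    and g_gens: "\<And>b. b \<in> H \<Longrightarrow> over G (g b) \<and> nonunital (g b)"
    and f_rels: "\<And>q. q \<in> R \<Longrightarrow> freealg_hom f q \<in> gideal H Q"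
    and g_rels: "\<And>q. q \<in> Q \<Longrightarrow> freealg_hom g q \<in> gideal G R"
    and gf: "\<And>a. a \<in> G \<Longrightarrow> freealg_hom g (f a) - gen a \<in> gideal G R"
    and fg: "\<And>b. b \<in> H \<Longrightarrow> freealg_hom f (g b) - gen b \<in> gideal H Q"
  shows "pres_iso G R H Q (freealg_hom f)"
proof -
  have gf_congruent: "freealg_hom g (freealg_hom f x) - x \<in> gideal G R" if "over G x" for x
    using f_gens g_gens by (intro freealg_hom_inverse_congruent[OF _ _ gf that]) blast+
  have fg_congruent: "freealg_hom f (freealg_hom g y) - y \<in> gideal H Q" if "over H y" for y
    using f_gens g_gens by (intro freealg_hom_inverse_congruent[OF _ _ fg that]) blast+
  have preserves: "freealg_hom f x \<in> gideal H Q" if "x \<in> gideal G R" for x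
    by (rule freealg_hom_gideal[OF _ f_rels that]) (use f_gens in blast)
  have reflects: "x \<in> gideal G R" if "over G x" and "freealg_hom f x \<in> gideal H Q" for x
  proof -
    have "freealg_hom g (freealg_hom f x) \<in> gideal G R"
      by (rule freealg_hom_gideal[OF _ g_rels that(2)]) (use g_gens in blast)
    then have "freealg_hom g (freealg_hom f x) - (freealg_hom g (freealg_hom f x) - x) \<in> gideal G R"
      using gf_congruent[OF that(1)] by (rule gideal_diff)
    then show ?thesis by simp
  qed
  show ?thesis
    unfolding pres_iso_def
  proof (intro conjI allI impI)
    fix x :: "('g,'k) freealg" assume "over G x \<and> nonunital x"
    then show "over H (freealg_hom f x)" "nonunital (freealg_hom f x)"
      using f_gens by (auto intro: over_freealg_hom nonunital_freealg_hom)
    show "x \<in> gideal G R \<longleftrightarrow> freealg_hom f x \<in> gideal H Q"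
      using \<open>over G x \<and> nonunital x\<close> preserves reflects by blast
  next
    fix x y :: "('g,'k) freealg"
    show "freealg_hom f (x + y) = freealg_hom f x + freealg_hom f y"
      by (rule freealg_hom_add)
    show "freealg_hom f (x * y) - freealg_hom f x * freealg_hom f y \<in> gideal H Q"
      by (simp add: freealg_hom_mult gideal.zero)
  next
    fix c and x :: "('g,'k) freealg"
    show "freealg_hom f (scal c * x) = scal c * freealg_hom f x"
      by (simp add: freealg_hom_mult)
  next
    fix y :: "('h,'k) freealg" assume "over H y \<and> nonunital y"
    then show "\<exists>x. over G x \<and> nonunital x \<and> freealg_hom f x - y \<in> gideal H Q"
      using g_gens fg_congruent
      by (intro exI[of _ "freealg_hom g y"]) (auto intro: over_freealg_hom nonunital_freealg_hom)
  qed
qed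

lemma separated_graph_edge_endpoints:
  "separated_graph V Ed s r C \<Longrightarrow> e \<in> Ed \<Longrightarrow> s e \<in> V \<and> r e \<in> V"
  by (simp add: separated_graph_def)

lemma separated_graph_block_source:
  assumes "separated_graph V Ed s r C" and "X \<in> C"
  shows "\<exists>v\<in>V. X \<in> Cv s C v"
proof -
  have "C = (\<Union>v\<in>V. Cv s C v)" using assms(1) by (simp add: separated_graph_def)
  then show ?thesis using assms(2) by blast
qed

lemma separated_graph_block_subset:
  assumes "separated_graph V Ed s r C" and "X \<in> C"
  shows "X \<subseteq> Ed"
proof -
  obtain v where "v \<in> V" "X \<in> Cv s C v"
    using separated_graph_block_source[OF assms] by blast
  moreover have "\<Union>(Cv s C v) = {e\<in>Ed. s e = v}"
    using assms(1) \<open>v \<in> V\<close> by (simp add: separated_graph_def)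
  ultimately show ?thesis by blast
qed

lemma separated_graph_edge_block:
  assumes "separated_graph V Ed s r C" and "e \<in> Ed"
  shows "\<exists>X\<in>C. e \<in> X"
proof -
  have "e \<in> \<Union>(Cv s C (s e))"
    using assms by (simp add: separated_graph_def)
  then show ?thesis by (auto simp: Cv_def)
qed

section \<open>Comparison maps between L_K(E,C,S) and the amalgamated free product\<close>

primrec L_to_A :: "'e set \<Rightarrow> ('v,'e) lgen \<Rightarrow> (('v,'e) agen,'k::field) freealg" where
  "L_to_A X (LV v) = gen (AV X v)"
| "L_to_A X (LE e) = gen (AE e)"
| "L_to_A X (LS e) = gen (AS e)"

primrec A_to_L :: "('v,'e) agen \<Rightarrow> (('v,'e) lgen,'k::field) freealg" where
  "A_to_L (AV X v) = gen (LV v)"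
| "A_to_L (AE e) = gen (LE e)"
| "A_to_L (AS e) = gen (LS e)"

lemma nonunital_L_to_A: "nonunital (L_to_A X a)"
  by (cases a) (simp_all add: nonunital_gen)

lemma nonunital_A_to_L: "nonunital (A_to_L b)"
  by (cases b) (simp_all add: nonunital_gen)

lemma over_L_to_A:
  assumes "separated_graph V Ed s r C" and "X \<in> C" and "a \<in> L_gens V Ed"
  shows "over (A_gens V C) (L_to_A X a)"
proof -
  have "AE e \<in> A_gens V C \<and> AS e \<in> A_gens V C" if "e \<in> Ed" for e
    using separated_graph_edge_block[OF assms(1) that] by (auto simp: A_gens_def AX_gens_def)
  then show ?thesis
    using assms(2,3) by (cases a) (auto intro!: over_gen simp: L_gens_def A_gens_def AX_gens_def)
qed

lemma over_A_to_L:
  assumes "separated_graph V Ed s r C" and "b \<in> A_gens V C"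
  shows "over (L_gens V Ed) (A_to_L b)"
proof -
  obtain X where "X \<in> C" "b \<in> AX_gens V X" using assms(2) by (auto simp: A_gens_def)
  moreover have "X \<subseteq> Ed" using separated_graph_block_subset[OF assms(1) \<open>X \<in> C\<close>] .
  ultimately show ?thesis by (cases b) (auto intro!: over_gen simp: L_gens_def AX_gens_def)
qed

lemma L_rels_cases [consumes 1, case_names vertices edge orthogonality cuntz_krieger]:
  assumes "q \<in> L_rels V Ed s r C S"
  obtains (vertices) v w where "v \<in> V" "w \<in> V"
      "q = gen (LV v) * gen (LV w) - (if v = w then gen (LV v) else 0)"
  | (edge) e where "e \<in> Ed"
      "q \<in> {gen (LV (s e)) * gen (LE e) - gen (LE e), gen (LE e) * gen (LV (r e)) - gen (LE e),
            gen (LV (r e)) * gen (LS e) - gen (LS e), gen (LS e) * gen (LV (s e)) - gen (LS e)}"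
  | (orthogonality) e f Y where "Y \<in> C" "e \<in> Y" "f \<in> Y"
      "q = gen (LS e) * gen (LE f) - (if e = f then gen (LV (r e)) else 0)"
  | (cuntz_krieger) v X where "X \<in> S" "X \<in> Cv s C v"
      "q = gen (LV v) - (\<Sum>e\<in>X. gen (LE e) * gen (LS e))"
  using assms unfolding L_rels_def by blast

lemma AX_rels_cases [consumes 1, case_names vertices edge orthogonality cuntz_krieger]:
  assumes "q \<in> AX_rels V s r S X"
  obtains (vertices) v w where "v \<in> V" "w \<in> V"
      "q = gen (AV X v) * gen (AV X w) - (if v = w then gen (AV X v) else 0)"
  | (edge) e where "e \<in> X"
      "q \<in> {gen (AE e) * gen (AV X (r e)) - gen (AE e), gen (AV X (s e)) * gen (AE e) - gen (AE e),
            gen (AV X (r e)) * gen (AS e) - gen (AS e), gen (AS e) * gen (AV X (s e)) - gen (AS e)}"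
  | (orthogonality) e f where "e \<in> X" "f \<in> X"
      "q = gen (AS e) * gen (AE f) - (if e = f then gen (AV X (r e)) else 0)"
  | (cuntz_krieger) v where "X \<in> S" "\<forall>e\<in>X. s e = v"
      "q = gen (AV X v) - (\<Sum>e\<in>X. gen (AE e) * gen (AS e))"
  using assms unfolding AX_rels_def by blast

lemma L_rels_over:
  assumes sg: "separated_graph V Ed s r C" and "S \<subseteq> C" and "q \<in> L_rels V Ed s r C S"
  shows "over (L_gens V Ed) q"
  using assms(3)
proof (cases rule: L_rels_cases)
  case (vertices v w)
  then show ?thesis by (auto intro!: over_diff over_mult over_gen simp: L_gens_def)
next
  case (edge e)
  then show ?thesis
    using separated_graph_edge_endpoints[OF sg edge(1)]
    by (auto intro!: over_diff over_mult over_gen simp: L_gens_def)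
next
  case (orthogonality e f Y)
  then have "e \<in> Ed" "f \<in> Ed" using separated_graph_block_subset[OF sg] by blast+
  then show ?thesis
    using orthogonality(4) separated_graph_edge_endpoints[OF sg]
    by (auto intro!: over_diff over_mult over_gen simp: L_gens_def)
next
  case (cuntz_krieger v X)
  then have "X \<subseteq> Ed" "X \<noteq> {}" "\<forall>e\<in>X. s e = v"
    using assms(2) separated_graph_block_subset[OF sg] by (auto simp: Cv_def)
  then have "v \<in> V" using separated_graph_edge_endpoints[OF sg] by fastforce
  then show ?thesis
    using cuntz_krieger(3) \<open>X \<subseteq> Ed\<close>
    by (auto intro!: over_diff over_mult over_gen over_sum simp: L_gens_def)
qed

lemma L_rels_in_AX_rels:
  assumes sg: "separated_graph V Ed s r C" and "C \<noteq> {}" and "S \<subseteq> C"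
    and "q \<in> L_rels V Ed s r C S"
  shows "\<exists>X\<in>C. freealg_hom (L_to_A X) q \<in> AX_rels V s r S X"
  using assms(4)
proof (cases rule: L_rels_cases)
  case (vertices v w)
  obtain X where "X \<in> C" using assms(2) by blast
  moreover have "freealg_hom (L_to_A X) q
      = gen (AV X v) * gen (AV X w) - (if v = w then gen (AV X v) else 0)"
    using vertices(3) by (simp add: freealg_hom_mult freealg_hom_diff if_distrib[of "freealg_hom _"])
  moreover have "\<dots> \<in> AX_rels V s r S X"
    unfolding AX_rels_def using vertices(1,2) by blast
  ultimately show ?thesis by metis
next
  case (edge e)
  obtain X where "X \<in> C" "e \<in> X" using separated_graph_edge_block[OF sg edge(1)] by blast
  moreover have "freealg_hom (L_to_A X) q \<in>
      {gen (AV X (s e)) * gen (AE e) - gen (AE e), gen (AE e) * gen (AV X (r e)) - gen (AE e),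
       gen (AV X (r e)) * gen (AS e) - gen (AS e), gen (AS e) * gen (AV X (s e)) - gen (AS e)}"
    using edge(2) by (auto simp: freealg_hom_mult freealg_hom_diff)
  moreover have "{gen (AV X (s e)) * gen (AE e) - gen (AE e), gen (AE e) * gen (AV X (r e)) - gen (AE e),
       gen (AV X (r e)) * gen (AS e) - gen (AS e), gen (AS e) * gen (AV X (s e)) - gen (AS e)}
      \<subseteq> AX_rels V s r S X"
    unfolding AX_rels_def using \<open>e \<in> X\<close> by blast
  ultimately show ?thesis by blast
next
  case (orthogonality e f Y)
  have "freealg_hom (L_to_A Y) q
      = gen (AS e) * gen (AE f) - (if e = f then gen (AV Y (r e)) else 0)"
    using orthogonality(4) by (simp add: freealg_hom_mult freealg_hom_diff if_distrib[of "freealg_hom _"])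
  moreover have "\<dots> \<in> AX_rels V s r S Y"
    unfolding AX_rels_def using orthogonality(2,3) by blast
  ultimately show ?thesis using orthogonality(1) by metis
next
  case (cuntz_krieger v X)
  have "freealg_hom (L_to_A X) q = gen (AV X v) - (\<Sum>e\<in>X. gen (AE e) * gen (AS e))"
    using cuntz_krieger(3) by (simp add: freealg_hom_mult freealg_hom_diff freealg_hom_sum)
  moreover have "\<dots> \<in> AX_rels V s r S X"
    using cuntz_krieger(1,2) unfolding AX_rels_def Cv_def by blast
  ultimately show ?thesis using cuntz_krieger(1) assms(3) by (metis subsetD)
qed

lemma L_to_A_copies_congruent:
  assumes "X \<in> C" and "Y \<in> C" and "a \<in> L_gens V Ed"
  shows "L_to_A X a - L_to_A Y a \<in> gideal (A_gens V C) (A_rels V s r C S \<union> I_gens V C)"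
  using assms by (cases a) (auto simp: L_gens_def I_gens_def intro: gideal_base gideal.zero)

lemma L_to_A_rels:
  assumes sg: "separated_graph V Ed s r C" and "X0 \<in> C" and "S \<subseteq> C"
    and "q \<in> L_rels V Ed s r C S"
  shows "freealg_hom (L_to_A X0) q \<in> gideal (A_gens V C) (A_rels V s r C S \<union> I_gens V C)"
    (is "_ \<in> ?I")
proof -
  obtain X where "X \<in> C" and "freealg_hom (L_to_A X) q \<in> AX_rels V s r S X"
    using L_rels_in_AX_rels[OF sg _ assms(3,4)] assms(2) by blast
  then have "freealg_hom (L_to_A X) q \<in> ?I"
    by (auto simp: A_rels_def intro: gideal_base)
  moreover have "freealg_hom (L_to_A X0) q - freealg_hom (L_to_A X) q \<in> ?I"
    by (rule freealg_hom_congruent[OF _ L_rels_over[OF sg assms(3,4)]])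
      (use over_L_to_A[OF sg] L_to_A_copies_congruent assms(2) \<open>X \<in> C\<close> in blast)
  ultimately show ?thesis
    using gideal.add by fastforce
qed

lemma A_to_L_AX_rels:
  assumes sg: "separated_graph V Ed s r C" and "X \<in> C" and "q \<in> AX_rels V s r S X"
  shows "freealg_hom A_to_L q \<in> L_rels V Ed s r C S"
  using assms(3)
proof (cases rule: AX_rels_cases)
  case (vertices v w)
  then have "freealg_hom A_to_L q = gen (LV v) * gen (LV w) - (if v = w then gen (LV v) else 0)"
    by (simp add: freealg_hom_mult freealg_hom_diff if_distrib[of "freealg_hom _"])
  then show ?thesis unfolding L_rels_def using vertices(1,2) by blast
next
  case (edge e)
  then have "e \<in> Ed" using separated_graph_block_subset[OF sg assms(2)] by blast
  moreover have "freealg_hom A_to_L q \<in>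
      {gen (LV (s e)) * gen (LE e) - gen (LE e), gen (LE e) * gen (LV (r e)) - gen (LE e),
       gen (LV (r e)) * gen (LS e) - gen (LS e), gen (LS e) * gen (LV (s e)) - gen (LS e)}"
    using edge(2) by (auto simp: freealg_hom_mult freealg_hom_diff)
  ultimately show ?thesis unfolding L_rels_def by blast
next
  case (orthogonality e f)
  then have "freealg_hom A_to_L q = gen (LS e) * gen (LE f) - (if e = f then gen (LV (r e)) else 0)"
    by (simp add: freealg_hom_mult freealg_hom_diff if_distrib[of "freealg_hom _"])
  then show ?thesis unfolding L_rels_def using orthogonality(1,2) assms(2) by blast
next
  case (cuntz_krieger v)
  obtain u where "u \<in> V" "X \<in> Cv s C u" using separated_graph_block_source[OF sg assms(2)] by blast
  moreover from this have "u = v" using cuntz_krieger(2) by (force simp: Cv_def)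
  moreover have "freealg_hom A_to_L q = gen (LV v) - (\<Sum>e\<in>X. gen (LE e) * gen (LS e))"
    using cuntz_krieger(3) by (simp add: freealg_hom_mult freealg_hom_diff freealg_hom_sum)
  ultimately show ?thesis unfolding L_rels_def using cuntz_krieger(1) by blast
qed

lemma A_to_L_rels:
  assumes "separated_graph V Ed s r C" and "q \<in> A_rels V s r C S \<union> I_gens V C"
  shows "freealg_hom A_to_L q \<in> gideal (L_gens V Ed) (L_rels V Ed s r C S)"
  using assms A_to_L_AX_rels[OF assms(1)]
  by (auto simp: A_rels_def I_gens_def freealg_hom_diff intro: gideal_base gideal.zero)

lemma A_to_L_L_to_A [simp]: "freealg_hom A_to_L (L_to_A X a) = (gen a :: (('v,'e) lgen,'k::field) freealg)"
  by (cases a) simp_all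

lemma L_to_A_A_to_L_congruent:
  assumes "X0 \<in> C" and "b \<in> A_gens V C"
  shows "freealg_hom (L_to_A X0) (A_to_L b) - gen b \<in> gideal (A_gens V C) (A_rels V s r C S \<union> I_gens V C)"
  using assms by (cases b) (auto simp: A_gens_def AX_gens_def I_gens_def intro: gideal_base gideal.zero)

theorem proposition4p4:
  fixes V :: "'v set" and Ed :: "'e set" and s r :: "'e \<Rightarrow> 'v"
    and C S :: "'e set set"
  assumes "separated_graph V Ed s r C"
    and "C \<noteq> {}"
    and "S \<subseteq> {X\<in>C. finite X}"
  shows "\<exists>\<Phi> :: (('v,'e) lgen,'k::field) freealg \<Rightarrow> (('v,'e) agen,'k) freealg.
           pres_iso (L_gens V Ed) (L_rels V Ed s r C S)
                    (A_gens V C) (A_rels V s r C S \<union> I_gens V C) \<Phi>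
         \<and> (\<forall>e\<in>Ed. \<Phi> (gen (LE e)) - gen (AE e) \<in> gideal (A_gens V C) (A_rels V s r C S \<union> I_gens V C)
                  \<and> \<Phi> (gen (LS e)) - gen (AS e) \<in> gideal (A_gens V C) (A_rels V s r C S \<union> I_gens V C))
         \<and> (\<forall>v\<in>V. \<forall>X\<in>C. \<Phi> (gen (LV v)) - gen (AV X v) \<in> gideal (A_gens V C) (A_rels V s r C S \<union> I_gens V C))"
proof -
  obtain X0 where X0: "X0 \<in> C" using assms(2) by blast
  have "S \<subseteq> C" using assms(3) by blast
  let ?\<Phi> = "freealg_hom (L_to_A X0) :: (('v,'e) lgen,'k) freealg \<Rightarrow> _"
  have "pres_iso (L_gens V Ed) (L_rels V Ed s r C S) (A_gens V C) (A_rels V s r C S \<union> I_gens V C) ?\<Phi>"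
  proof (rule pres_iso_freealg_hom)
    show "over (A_gens V C) (L_to_A X0 a) \<and> nonunital (L_to_A X0 a)" if "a \<in> L_gens V Ed" for a
      using over_L_to_A[OF assms(1) X0 that] nonunital_L_to_A by blast
    show "over (L_gens V Ed) (A_to_L b) \<and> nonunital (A_to_L b)" if "b \<in> A_gens V C" for b
      using over_A_to_L[OF assms(1) that] nonunital_A_to_L by blast
  qed (use L_to_A_rels[OF assms(1) X0 \<open>S \<subseteq> C\<close>] A_to_L_rels[OF assms(1)]
        L_to_A_A_to_L_congruent[OF X0] in \<open>auto intro: gideal.zero\<close>)
  moreover have "?\<Phi> (gen (LV v)) - gen (AV X v) \<in> gideal (A_gens V C) (A_rels V s r C S \<union> I_gens V C)"
    if "v \<in> V" and "X \<in> C" for v X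
    using that X0 by (auto simp: I_gens_def intro: gideal_base)
  ultimately show ?thesis
    by (intro exI[of _ ?\<Phi>]) (auto intro: gideal.zero)
qed

end
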